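(* For any integer $n\ge1$ and real $0<p<1$, $$\sum_{t=0}^{n+1}|B_{n,p}(t-1)-B_{n,p}(t)|\le\frac{1}{\sqrt n}\cdot\frac{4}{\sqrt{p(1-p)}}.$$
   Context: $B_{n,p}(t)=\binom nt p^t(1-p)^{n-t}$ for $t\in[0:n]$ and $B_{n,p}(t)=0$ for $t\notin[0:n]$. *)

theory Defs
  imports Complex_Main
begin

definition binom_pmf :: "nat \<Rightarrow> real \<Rightarrow> int \<Rightarrow> real" where
  "binom_pmf n p t = (if 0 \<le> t \<and> t \<le> int n
     then real (n choose nat t) * p ^ nat t * (1 - p) ^ (n - nat t) else 0)"

end

theory Submission
  imports Defs "HOL-Analysis.Weierstrass_Theorems"
begin

text \<open>
  With \<open>m = n + 1\<close>, the difference \<open>B\<^sub>n\<^sub>,\<^sub>p(k-1) - B\<^sub>n\<^sub>,\<^sub>p(k)\<close> equals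
  \<open>(k - m p) B\<^sub>m\<^sub>,\<^sub>p(k) / (m p (1-p))\<close>. Hence the sum is the mean absolute deviation of
  the binomial law \<open>B\<^sub>m\<^sub>,\<^sub>p\<close> (whose weights are the Bernstein polynomials
  \<open>Bernstein m k p\<close>) divided by its variance \<open>V = m p (1-p)\<close>. By Cauchy-Schwarz the
  mean absolute deviation is at most \<open>sqrt V\<close>, so the sum is at most
  \<open>1 / sqrt V \<le> 1 / sqrt (n p (1-p))\<close>, which even beats the claimed bound by a factor 4.
\<close>

lemma sum_squared_deviation_Bernstein:
  "(\<Sum>k\<le>n. (real k - real n * x)\<^sup>2 * Bernstein n k x) = real n * x * (1 - x)"
proof -
  have "(\<Sum>k\<le>n. (real k - real n * x)\<^sup>2 * Bernstein n k x)
      = (\<Sum>k\<le>n. real k * (real k - 1) * Bernstein n k x)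
        + (1 - 2 * real n * x) * (\<Sum>k\<le>n. real k * Bernstein n k x)
        + (real n * x)\<^sup>2 * (\<Sum>k\<le>n. Bernstein n k x)"
    unfolding sum_distrib_left sum.distrib[symmetric]
    by (rule sum.cong) (simp_all add: algebra_simps power2_eq_square)
  also have "\<dots> = real n * x * (1 - x)"
    unfolding sum_kk_Bernstein sum_k_Bernstein sum_Bernstein
    by (simp add: algebra_simps power2_eq_square)
  finally show ?thesis .
qed

lemma sum_abs_deviation_Bernstein_le:
  assumes "0 \<le> x" "x \<le> 1"
  shows "(\<Sum>k\<le>n. \<bar>real k - real n * x\<bar> * Bernstein n k x) \<le> sqrt (real n * x * (1 - x))"
proof (rule real_le_rsqrt)
  define w where "w k = sqrt (Bernstein n k x)" for k
  have w_sq: "(w k)\<^sup>2 = Bernstein n k x" for k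
    using Bernstein_nonneg[OF assms] by (simp add: w_def)
  have "(\<Sum>k\<le>n. \<bar>real k - real n * x\<bar> * Bernstein n k x)\<^sup>2
      = (\<Sum>k\<le>n. (\<bar>real k - real n * x\<bar> * w k) * w k)\<^sup>2"
    by (simp add: mult.assoc flip: power2_eq_square w_sq)
  also have "\<dots> \<le> (\<Sum>k\<le>n. (\<bar>real k - real n * x\<bar> * w k)\<^sup>2) * (\<Sum>k\<le>n. (w k)\<^sup>2)"
    by (rule Cauchy_Schwarz_ineq_sum)
  also have "\<dots> = real n * x * (1 - x)"
    by (simp add: power_mult_distrib w_sq sum_squared_deviation_Bernstein)
  finally show "(\<Sum>k\<le>n. \<bar>real k - real n * x\<bar> * Bernstein n k x)\<^sup>2 \<le> real n * x * (1 - x)" .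
qed

lemma binom_pmf_of_nat: "binom_pmf n p (int k) = Bernstein n k p"
  by (simp add: binom_pmf_def Bernstein_def)

lemma Bernstein_Suc_absorb:
  "real (Suc n) * x * Bernstein n k x = real (Suc k) * Bernstein (Suc n) (Suc k) x"
proof -
  have "real (Suc n) * real (n choose k) = real (Suc n choose Suc k) * real (Suc k)"
    by (metis Suc_times_binomial_eq of_nat_mult)
  then show ?thesis
    by (simp add: Bernstein_def)
qed

lemma Bernstein_Suc_absorb_comp:
  "real (Suc n) * (1 - x) * Bernstein n k x = (real (Suc n) - real k) * Bernstein (Suc n) k x"
proof (cases "k \<le> n")
  case True
  have "real (Suc n) * real (n choose k) = real (Suc n - k) * real (Suc n choose k)"
    by (metis binomial_absorb_comp diff_Suc_1 of_nat_mult)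
  moreover have "Suc n - k = Suc (n - k)"
    using True by simp
  ultimately show ?thesis
    using True by (simp add: Bernstein_def mult_ac)
next
  case False
  then show ?thesis
    by (cases "k = Suc n") (simp_all add: Bernstein_def binomial_eq_0)
qed

lemma binom_pmf_pred_difference:
  assumes "0 < p" "p < 1"
  shows "binom_pmf n p (int k - 1) - binom_pmf n p (int k)
    = (real k - real (Suc n) * p) * Bernstein (Suc n) k p / (real (Suc n) * p * (1 - p))"
proof -
  have pred: "real (Suc n) * p * binom_pmf n p (int k - 1) = real k * Bernstein (Suc n) k p"
  proof (cases k)
    case (Suc j)
    then have "binom_pmf n p (int k - 1) = Bernstein n j p"
      by (simp add: binom_pmf_of_nat flip: of_nat_diff)
    then show ?thesis
      unfolding Suc by (simp only: Bernstein_Suc_absorb)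
  qed (simp add: binom_pmf_def)
  have self: "real (Suc n) * (1 - p) * binom_pmf n p (int k)
      = (real (Suc n) - real k) * Bernstein (Suc n) k p"
    by (simp only: binom_pmf_of_nat Bernstein_Suc_absorb_comp)
  have "real (Suc n) * p * (1 - p) * (binom_pmf n p (int k - 1) - binom_pmf n p (int k))
      = (1 - p) * (real (Suc n) * p * binom_pmf n p (int k - 1))
        - p * (real (Suc n) * (1 - p) * binom_pmf n p (int k))"
    by (simp add: algebra_simps)
  also have "\<dots> = (real k - real (Suc n) * p) * Bernstein (Suc n) k p"
    unfolding pred self by (simp add: algebra_simps)
  finally show ?thesis
    using assms by (simp add: eq_divide_eq mult.commute)
qed

lemma sum_abs_pred_difference_binom_pmf_le:
  assumes "0 < p" "p < 1"
  shows "(\<Sum>t\<in>{0..int n + 1}. \<bar>binom_pmf n p (t - 1) - binom_pmf n p t\<bar>)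
    \<le> 1 / sqrt (real (Suc n) * p * (1 - p))"
proof -
  define V where "V = real (Suc n) * p * (1 - p)"
  have "V > 0"
    using assms by (simp add: V_def)
  have "(\<Sum>t\<in>{0..int n + 1}. \<bar>binom_pmf n p (t - 1) - binom_pmf n p t\<bar>)
      = (\<Sum>k\<le>Suc n. \<bar>binom_pmf n p (int k - 1) - binom_pmf n p (int k)\<bar>)"
    by (rule sum.reindex_bij_witness[of _ int nat]) auto
  also have "\<dots> = (\<Sum>k\<le>Suc n. \<bar>real k - real (Suc n) * p\<bar> * Bernstein (Suc n) k p) / V"
    unfolding sum_divide_distrib
  proof (rule sum.cong)
    fix k
    have "\<bar>binom_pmf n p (int k - 1) - binom_pmf n p (int k)\<bar>
        = \<bar>(real k - real (Suc n) * p) * Bernstein (Suc n) k p / V\<bar>"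
      unfolding V_def binom_pmf_pred_difference[OF assms] ..
    also have "\<dots> = \<bar>real k - real (Suc n) * p\<bar> * Bernstein (Suc n) k p / V"
      using assms \<open>V > 0\<close> by (simp add: abs_mult Bernstein_nonneg)
    finally show "\<bar>binom_pmf n p (int k - 1) - binom_pmf n p (int k)\<bar>
        = \<bar>real k - real (Suc n) * p\<bar> * Bernstein (Suc n) k p / V" .
  qed simp
  also have "\<dots> \<le> sqrt V / V"
    using sum_abs_deviation_Bernstein_le[of p "Suc n"] assms \<open>V > 0\<close>
    by (simp add: V_def divide_right_mono)
  also have "\<dots> = 1 / sqrt V"
    using \<open>V > 0\<close> by (simp add: divide_simps)
  finally show ?thesis
    by (simp add: V_def)
qed

theorem lemma7:
  fixes n :: nat and p :: real
  assumes "n \<ge> 1" and "0 < p" and "p < 1"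
  shows "(\<Sum>t\<in>{0..int n + 1}. \<bar>binom_pmf n p (t - 1) - binom_pmf n p t\<bar>)
           \<le> 1 / sqrt (real n) * (4 / sqrt (p * (1 - p)))"
proof -
  have pos: "0 < real n * (p * (1 - p))"
    using assms by simp
  have "(\<Sum>t\<in>{0..int n + 1}. \<bar>binom_pmf n p (t - 1) - binom_pmf n p t\<bar>)
      \<le> 1 / sqrt (real (Suc n) * (p * (1 - p)))"
    using sum_abs_pred_difference_binom_pmf_le[OF assms(2,3)] by (simp add: mult.assoc)
  also have "\<dots> \<le> 1 / sqrt (real n * (p * (1 - p)))"
  proof (rule divide_left_mono)
    show "sqrt (real n * (p * (1 - p))) \<le> sqrt (real (Suc n) * (p * (1 - p)))"
      using assms by (intro real_sqrt_le_mono mult_right_mono) auto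
  qed (use pos in \<open>auto simp: zero_less_mult_iff\<close>)
  also have "\<dots> \<le> 4 / sqrt (real n * (p * (1 - p)))"
    using pos by (simp add: divide_right_mono)
  finally show ?thesis
    by (simp add: real_sqrt_mult)
qed

end
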